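(* $\bigcap_{k=0}^{+\infty}\mathbb P_k=\emptyset$, where $\mathbb P_k=\{p^{(k)}_n:n\in\mathbb N\}$.
   Context: Let $p_n$ denote the $n$-th prime number. Define $p^{(0)}_n=n$ and recursively $p^{(k+1)}_n=p_{p^{(k)}_n}$ for $k\in\mathbb N_0$ (so $\mathbb P_0=\mathbb N$, $\mathbb P_1$ is the set of primes). *)

theory Defs
  imports "HOL-Computational_Algebra.Primes" "HOL-Library.Infinite_Set"
begin

text \<open>p_n: the n-th prime, 1-indexed (p_1 = 2). For n = 0 the value is irrelevant.\<close>
definition nth_prime :: "nat \<Rightarrow> nat" where
  "nth_prime n = enumerate {p. prime p} (n - 1)"

definition iter_prime :: "nat \<Rightarrow> nat \<Rightarrow> nat" where
  "iter_prime k n = (nth_prime ^^ k) n"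

definition primeset :: "nat \<Rightarrow> nat set" where
  "primeset k = {iter_prime k n | n. n \<ge> 1}"

end

theory Submission
  imports Defs
begin

text \<open>Since p_n > n for n \<ge> 1, iterating gives p^(k)_n \<ge> n + k. A common element m
  of all P_k would equal p^(m)_n for some n \<ge> 1, whence m \<ge> n + m > m.\<close>

lemma enumerate_ge_add:
  fixes S :: "nat set"
  assumes "infinite S" and "\<And>x. x \<in> S \<Longrightarrow> a \<le> x"
  shows "a + i \<le> enumerate S i"
proof (induction i)
  case 0
  show ?case using assms by (simp add: enumerate_in_set)
next
  case (Suc i)
  with enumerate_step[OF \<open>infinite S\<close>, of i] show ?case by simp
qed

lemma nth_prime_gt:
  assumes "n \<ge> 1"
  shows "n < nth_prime n"
proof -
  have "2 + (n - 1) \<le> enumerate {p::nat. prime p} (n - 1)"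
    by (rule enumerate_ge_add) (auto simp: primes_infinite prime_ge_2_nat)
  with assms show ?thesis by (simp add: nth_prime_def)
qed

lemma funpow_ge_add:
  fixes f :: "nat \<Rightarrow> nat"
  assumes "\<And>m. n \<le> m \<Longrightarrow> m < f m"
  shows "n + k \<le> (f ^^ k) n"
proof (induction k)
  case (Suc k)
  with assms[of "(f ^^ k) n"] show ?case by simp
qed simp

lemma iter_prime_ge_add:
  assumes "n \<ge> 1"
  shows "n + k \<le> iter_prime k n"
  unfolding iter_prime_def using assms nth_prime_gt by (intro funpow_ge_add) simp

lemma not_in_own_primeset: "m \<notin> primeset m"
  using iter_prime_ge_add[of _ m] by (fastforce simp: primeset_def)

theorem corollary2:
  shows "(\<Inter>k. primeset k) = {}"
  using not_in_own_primeset by blast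

end
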